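(* Let an instance of MWSBP be given, let $O_1,\ldots,O_q$ be the bins of an optimal solution, and let $B_1,\ldots,B_p$ be the bins output by the Knapsack-Batching algorithm on this instance. Set $B_j:=\emptyset$ for $j\ge p+1$ and $O_j:=\emptyset$ for $j\ge q+1$. Let $\alpha\ge 1$. If for all $k\in\{1,\ldots,q\}$ \[ w(B_1)+w(B_2)+\cdots+w(B_{\lfloor \alpha k\rfloor}) \;\ge\; w(O_1)+w(O_2)+\cdots+w(O_k), \] then $\Phi(B_1,\ldots,B_p)\le \alpha\cdot \Phi(O_1,\ldots,O_q)$, i.e. $\mathtt{KB}\le \alpha\cdot \mathtt{OPT}$.
   Context: Min-Weighted Sum Bin Packing (MWSBP): an instance consists of $n$ items with sizes $s_i\in(0,1]$ and weights $w_i>0$, $i\in[n]=\{1,\ldots,n\}$. For a vector $x\in\mathbb{R}^n$ and $S\subseteq[n]$ write $x(S)=\sum_{i\in S}x_i$. A feasible solution is a partition of $[n]$ into bins $B_1,\ldots,B_p$ with $s(B_k)\le 1$ for all $k$; its cost is $\Phi(B_1,\ldots,B_p)=\sum_{k=1}^p k\, w(B_k)$. $\mathtt{OPT}$ denotes the minimum cost. The Knapsack-Batching algorithm ($\mathtt{KB}$): for $k=1,2,\ldots$ while items remain, let $B_k$ be a subset of the remaining items $[n]\setminus(B_1\cup\cdots\cup B_{k-1})$ of maximum total weight $w(B_k)$ subject to $s(B_k)\le 1$ (ties broken arbitrarily). $\mathtt{KB}$ also denotes the cost of its output. *)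

theory Defs
  imports Main "HOL-Library.Multiset" Complex_Main
begin

text \<open>An MWSBP instance: items 1..n, sizes s i in (0,1], weights w i > 0.
A solution is a list of bins (bin number k is the k-th list element, 1-indexed).\<close>

definition valid_instance :: "nat \<Rightarrow> (nat \<Rightarrow> real) \<Rightarrow> (nat \<Rightarrow> real) \<Rightarrow> bool" where
  "valid_instance n s w \<longleftrightarrow> (\<forall>i\<in>{1..n}. 0 < s i \<and> s i \<le> 1 \<and> 0 < w i)"

definition feasible :: "nat \<Rightarrow> (nat \<Rightarrow> real) \<Rightarrow> nat set list \<Rightarrow> bool" where
  "feasible n s Bs \<longleftrightarrow>
     (\<Union>(set Bs) = {1..n}) \<and>
     (\<forall>k<length Bs. Bs ! k \<noteq> {} \<and> sum s (Bs ! k) \<le> 1) \<and>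
     (\<forall>k<length Bs. \<forall>l<length Bs. k \<noteq> l \<longrightarrow> Bs ! k \<inter> Bs ! l = {})"

definition cost :: "(nat \<Rightarrow> real) \<Rightarrow> nat set list \<Rightarrow> real" where
  "cost w Bs = (\<Sum>k<length Bs. real (k + 1) * sum w (Bs ! k))"

definition optimal :: "nat \<Rightarrow> (nat \<Rightarrow> real) \<Rightarrow> (nat \<Rightarrow> real) \<Rightarrow> nat set list \<Rightarrow> bool" where
  "optimal n s w Os \<longleftrightarrow> feasible n s Os \<and> (\<forall>Bs. feasible n s Bs \<longrightarrow> cost w Os \<le> cost w Bs)"

text \<open>Bs is a possible output of Knapsack-Batching (for some tie-breaking): the algorithm
runs while items remain, and in step k picks a maximum-weight subset of the remaining items
with total size at most 1.\<close>
definition KB_output :: "nat \<Rightarrow> (nat \<Rightarrow> real) \<Rightarrow> (nat \<Rightarrow> real) \<Rightarrow> nat set list \<Rightarrow> bool" where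
  "KB_output n s w Bs \<longleftrightarrow>
     (\<Union>(set Bs) = {1..n}) \<and>
     (\<forall>k<length Bs.
        let R = {1..n} - \<Union>(set (take k Bs)) in
          R \<noteq> {} \<and> Bs ! k \<subseteq> R \<and> sum s (Bs ! k) \<le> 1 \<and>
          (\<forall>S. S \<subseteq> R \<and> sum s S \<le> 1 \<longrightarrow> sum w S \<le> sum w (Bs ! k)))"

definition bin :: "nat set list \<Rightarrow> nat \<Rightarrow> nat set" where
  "bin Bs j = (if 1 \<le> j \<and> j \<le> length Bs then Bs ! (j - 1) else {})"

end

theory Submission
  imports Defs
begin

text \<open>Write \<open>b\<^sub>j = w(B\<^sub>j)\<close>, \<open>c\<^sub>j = w(O\<^sub>j)\<close> and \<open>f k = \<lfloor>\<alpha> k\<rfloor>\<close>. Both solutions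
  partition the items, so \<open>\<Sum> b\<^sub>j = \<Sum> c\<^sub>j\<close>, and a cost \<open>\<Sum> j b\<^sub>j\<close> is the sum over
  \<open>t \<ge> 0\<close> of the tail weights \<open>\<Sum>\<^sub>j\<^sub>>\<^sub>t b\<^sub>j\<close>. If \<open>k\<close> is the largest index with \<open>f k \<le> t\<close>,
  the hypothesis bounds the \<open>B\<close>-tail after \<open>t\<close> by the \<open>O\<close>-tail after \<open>k\<close>, i.e. by the
  weight of the bins \<open>O\<^sub>j\<close> with \<open>f j > t\<close>. Summing over \<open>t\<close>, every \<open>c\<^sub>j\<close> is counted at
  most \<open>f j \<le> \<alpha> j\<close> times.\<close>

lemma sum_of_nat_mult_eq_sum_tails:
  fixes g :: "nat \<Rightarrow> 'a :: comm_semiring_1"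
  shows "(\<Sum>j=1..p. of_nat j * g j) = (\<Sum>t<p. \<Sum>j=Suc t..p. g j)"
proof (induction p)
  case 0
  then show ?case by simp
next
  case (Suc p)
  have "(\<Sum>t<Suc p. \<Sum>j=Suc t..Suc p. g j) = (\<Sum>t<p. \<Sum>j=Suc t..Suc p. g j) + g (Suc p)"
    by simp
  also have "\<dots> = (\<Sum>t<p. (\<Sum>j=Suc t..p. g j) + g (Suc p)) + g (Suc p)"
    by (intro arg_cong2[where f="(+)"] sum.cong) auto
  also have "\<dots> = (\<Sum>t<p. \<Sum>j=Suc t..p. g j) + of_nat (Suc p) * g (Suc p)"
    by (simp add: sum.distrib algebra_simps)
  finally show ?case using Suc by simp
qed

lemma mono_sublevel_set_eq_atLeastAtMost:
  fixes f :: "nat \<Rightarrow> 'a :: linorder"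
  assumes "mono f"
  obtains k where "k \<le> q" and "{j\<in>{1..q}. f j \<le> t} = {1..k}"
proof
  define K where "K = insert 0 {j\<in>{1..q}. f j \<le> t}"
  have "finite K" by (simp add: K_def)
  then have "Max K \<in> K" by (intro Max_in) (simp_all add: K_def)
  then show "Max K \<le> q" by (auto simp: K_def)
  show "{j\<in>{1..q}. f j \<le> t} = {1..Max K}"
  proof (intro set_eqI iffI)
    fix j assume "j \<in> {j\<in>{1..q}. f j \<le> t}"
    then show "j \<in> {1..Max K}" using \<open>finite K\<close> by (auto simp: K_def)
  next
    fix j assume j: "j \<in> {1..Max K}"
    then have "Max K \<in> {j\<in>{1..q}. f j \<le> t}" using \<open>Max K \<in> K\<close> by (auto simp: K_def)
    moreover have "f j \<le> f (Max K)" using j \<open>mono f\<close> by (auto dest: monoD)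
    ultimately show "j \<in> {j\<in>{1..q}. f j \<le> t}" using j by auto
  qed
qed

lemma tail_le_if_prefix_dominated:
  fixes b c :: "nat \<Rightarrow> real" and f :: "nat \<Rightarrow> nat"
  assumes b_nonneg: "\<And>j. b j \<ge> 0"
    and total: "(\<Sum>j=1..p. b j) = (\<Sum>j=1..q. c j)"
    and "mono f"
    and dominated: "\<And>k. k \<in> {1..q} \<Longrightarrow> (\<Sum>j=1..k. c j) \<le> (\<Sum>j=1..f k. b j)"
    and "t < p"
  shows "(\<Sum>j=Suc t..p. b j) \<le> (\<Sum>j\<in>{j\<in>{1..q}. t < f j}. c j)"
proof -
  obtain k where "k \<le> q" and k: "{j\<in>{1..q}. f j \<le> t} = {1..k}"
    using mono_sublevel_set_eq_atLeastAtMost[OF \<open>mono f\<close>] by blast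
  have "f j \<le> t \<longleftrightarrow> j \<le> k" if "j \<in> {1..q}" for j
    using that k[unfolded set_eq_iff, rule_format, of j] by auto
  then have upper: "{j\<in>{1..q}. t < f j} = {Suc k..q}"
    using \<open>k \<le> q\<close> by (auto simp: not_le[symmetric])
  have "(\<Sum>j=1..k. c j) \<le> (\<Sum>j=1..t. b j)"
  proof (cases "k = 0")
    case False
    then have "k \<in> {j\<in>{1..q}. f j \<le> t}" unfolding k by simp
    then have "f k \<le> t" by simp
    have "(\<Sum>j=1..k. c j) \<le> (\<Sum>j=1..f k. b j)" using False \<open>k \<le> q\<close> dominated by simp
    also have "\<dots> \<le> (\<Sum>j=1..t. b j)" using \<open>f k \<le> t\<close> b_nonneg by (intro sum_mono2) auto
    finally show ?thesis .
  qed (simp add: b_nonneg sum_nonneg)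
  moreover have "(\<Sum>j=1..p. b j) = (\<Sum>j=1..t. b j) + (\<Sum>j=Suc t..p. b j)"
    using \<open>t < p\<close> sum.ub_add_nat[of 1 t b "p - t"] by simp
  moreover have "(\<Sum>j=1..q. c j) = (\<Sum>j=1..k. c j) + (\<Sum>j=Suc k..q. c j)"
    using \<open>k \<le> q\<close> sum.ub_add_nat[of 1 k c "q - k"] by simp
  ultimately show ?thesis using total unfolding upper by linarith
qed

lemma weighted_sum_le_if_prefix_dominated:
  fixes b c :: "nat \<Rightarrow> real" and f :: "nat \<Rightarrow> nat"
  assumes b_nonneg: "\<And>j. b j \<ge> 0" and c_nonneg: "\<And>j. c j \<ge> 0"
    and total: "(\<Sum>j=1..p. b j) = (\<Sum>j=1..q. c j)"
    and "mono f" and f_le: "\<And>j. real (f j) \<le> \<alpha> * real j"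
    and dominated: "\<And>k. k \<in> {1..q} \<Longrightarrow> (\<Sum>j=1..k. c j) \<le> (\<Sum>j=1..f k. b j)"
  shows "(\<Sum>j=1..p. real j * b j) \<le> \<alpha> * (\<Sum>j=1..q. real j * c j)"
proof -
  have "(\<Sum>j=1..p. real j * b j) = (\<Sum>t<p. \<Sum>j=Suc t..p. b j)"
    by (rule sum_of_nat_mult_eq_sum_tails)
  also have "\<dots> \<le> (\<Sum>t<p. \<Sum>j\<in>{j\<in>{1..q}. t < f j}. c j)"
    using tail_le_if_prefix_dominated[OF b_nonneg total \<open>mono f\<close> dominated]
    by (intro sum_mono) auto
  also have "\<dots> = (\<Sum>t<p. \<Sum>j=1..q. if t < f j then c j else 0)"
    by (intro sum.cong refl sum.inter_filter) simp
  also have "\<dots> = (\<Sum>j=1..q. \<Sum>t<p. if t < f j then c j else 0)"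
    by (rule sum.swap)
  also have "\<dots> \<le> (\<Sum>j=1..q. \<alpha> * (real j * c j))"
  proof (rule sum_mono)
    fix j
    have "(\<Sum>t<p. if t < f j then c j else 0) = real (card ({..<p} \<inter> {..<f j})) * c j"
      by (simp add: sum.If_cases lessThan_def)
    also have "\<dots> \<le> real (f j) * c j"
      using c_nonneg by (intro mult_right_mono)
        (metis card_lessThan card_mono finite_lessThan inf_le2 of_nat_mono)
    also have "\<dots> \<le> \<alpha> * (real j * c j)"
      using mult_right_mono[OF f_le c_nonneg] by (simp add: mult.assoc)
    finally show "(\<Sum>t<p. if t < f j then c j else 0) \<le> \<alpha> * (real j * c j)" .
  qed
  also have "\<dots> = \<alpha> * (\<Sum>j=1..q. real j * c j)"
    by (simp add: sum_distrib_left)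
  finally show ?thesis .
qed

lemma sum_bin_eq_sum_nth:
  "(\<Sum>j=1..length L. g j (bin L j)) = (\<Sum>k<length L. g (Suc k) (L ! k))"
proof -
  have "(\<Sum>j=1..length L. g j (bin L j)) = (\<Sum>k<length L. g (Suc k) (bin L (Suc k)))"
    by (simp add: sum.atLeast1_atMost_eq)
  also have "\<dots> = (\<Sum>k<length L. g (Suc k) (L ! k))"
    by (intro sum.cong) (auto simp: bin_def)
  finally show ?thesis .
qed

lemma cost_eq_sum_bin: "cost w L = (\<Sum>j=1..length L. real j * sum w (bin L j))"
  unfolding cost_def sum_bin_eq_sum_nth[where g="\<lambda>j B. real j * sum w B"] by simp

lemma sum_bin_eq_sum_Union:
  assumes "finite (\<Union>(set L))"
    and "\<forall>k<length L. \<forall>l<length L. k \<noteq> l \<longrightarrow> L ! k \<inter> L ! l = {}"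
  shows "(\<Sum>j=1..length L. sum w (bin L j)) = sum w (\<Union>(set L))"
proof -
  have "finite (L ! k)" if "k < length L" for k
    using that assms(1) by (meson Sup_upper finite_subset nth_mem)
  have "(\<Sum>j=1..length L. sum w (bin L j)) = (\<Sum>k<length L. sum w (L ! k))"
    by (rule sum_bin_eq_sum_nth)
  also have "\<dots> = sum w (\<Union>k<length L. L ! k)"
    using \<open>\<And>k. k < length L \<Longrightarrow> finite (L ! k)\<close> assms(2)
    by (intro sum.UNION_disjoint[symmetric]) auto
  also have "(\<Union>k<length L. L ! k) = \<Union>(set L)"
    by (metis image_set map_nth set_upt atLeast_upt)
  finally show ?thesis .
qed

lemma bin_subset_Union: "bin L j \<subseteq> \<Union>(set L)"
proof (cases "1 \<le> j \<and> j \<le> length L")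
  case True
  then have "L ! (j - 1) \<in> set L" by (intro nth_mem) auto
  then show ?thesis using True by (simp add: bin_def Sup_upper)
qed (auto simp: bin_def)

lemma KB_output_disjoint:
  assumes "KB_output n s w Bs"
  shows "\<forall>k<length Bs. \<forall>l<length Bs. k \<noteq> l \<longrightarrow> Bs ! k \<inter> Bs ! l = {}"
proof -
  have earlier: "Bs ! k \<inter> Bs ! l = {}" if "k < l" "l < length Bs" for k l
  proof -
    have "Bs ! l \<inter> \<Union>(set (take l Bs)) = {}"
      using assms that unfolding KB_output_def Let_def by blast
    moreover have "Bs ! k \<in> set (take l Bs)"
      using that by (metis in_set_conv_nth length_take min.absorb4 nth_take)
    ultimately show ?thesis by blast
  qed
  show ?thesis
    by (metis earlier inf_commute linorder_neqE_nat)
qed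

theorem proposition1:
  fixes n :: nat and s w :: "nat \<Rightarrow> real" and Os Bs :: "nat set list" and \<alpha> :: real
  assumes "valid_instance n s w"
    and "optimal n s w Os"
    and "KB_output n s w Bs"
    and "\<alpha> \<ge> 1"
    and "\<forall>k\<in>{1..length Os}.
           (\<Sum>j=1..nat \<lfloor>\<alpha> * real k\<rfloor>. sum w (bin Bs j)) \<ge> (\<Sum>j=1..k. sum w (bin Os j))"
  shows "cost w Bs \<le> \<alpha> * cost w Os"
proof -
  have Os: "feasible n s Os" using assms(2) by (simp add: optimal_def)
  have Bs: "\<Union>(set Bs) = {1..n}" using assms(3) by (simp add: KB_output_def)
  have weight_nonneg: "sum w (bin L j) \<ge> 0" if "\<Union>(set L) = {1..n}" for L j
    using bin_subset_Union[of L j] that assms(1)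
    by (intro sum_nonneg) (auto simp: valid_instance_def less_imp_le)
  have "(\<Sum>j=1..length Bs. sum w (bin Bs j)) = sum w {1..n}"
    using sum_bin_eq_sum_Union[OF _ KB_output_disjoint[OF assms(3)]] Bs by simp
  moreover have "(\<Sum>j=1..length Os. sum w (bin Os j)) = sum w {1..n}"
    using sum_bin_eq_sum_Union[of Os w] Os by (simp add: feasible_def)
  moreover have "mono (\<lambda>k. nat \<lfloor>\<alpha> * real k\<rfloor>)"
    using assms(4) by (intro monoI nat_mono floor_mono mult_left_mono) auto
  moreover have "real (nat \<lfloor>\<alpha> * real k\<rfloor>) \<le> \<alpha> * real k" for k
    using assms(4) by simp
  ultimately have "(\<Sum>j=1..length Bs. real j * sum w (bin Bs j))
      \<le> \<alpha> * (\<Sum>j=1..length Os. real j * sum w (bin Os j))"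
    using weight_nonneg Bs Os assms(5) unfolding feasible_def
    by (intro weighted_sum_le_if_prefix_dominated) auto
  then show ?thesis by (simp only: cost_eq_sum_bin)
qed

end
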